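(* Let $q_0>0$, $\alpha\in\mathbb{R}$, $\theta_+\in(0,\pi)\setminus\{\pi/2\}$, and set $\xi(x,t)=q_0x\sin\theta_++\tfrac12\alpha t\tan\theta_+$. Then $q(x,t)=q_0e^{i\alpha t}\cos\!\big(\theta_+-i\xi(x,t)\big)\,\mathrm{sech}\,\xi(x,t)=q_0e^{i\alpha t}\big(\cos\theta_++i\sin\theta_+\tanh\xi\big)$ and $s(x,t)=\tfrac12 q_0\alpha\sin\theta_+\tan\theta_+\,\mathrm{sech}^2\xi(x,t)$ are smooth (nonsingular) on $\mathbb{R}^2$ and satisfy the nonlocal Sinh-Gordon system $q_{xt}(x,t)+2s(x,t)q(x,t)=0$, $s_x(x,t)=-\partial_t\big(q(x,t)q(-x,-t)\big)$, with $s(-x,-t)=s(x,t)$, $s(x,t)\to0$ as $|x|\to\infty$, and $q(x,t)\to q_0e^{i(\alpha t\pm\theta_+)}$ as $x\to\pm\infty$. *)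

theory Defs
  imports "HOL-Analysis.Analysis"
begin

definition sech :: "real \<Rightarrow> real" where
  "sech y = 1 / cosh y"

definition xi_fn :: "real \<Rightarrow> real \<Rightarrow> real \<Rightarrow> real \<Rightarrow> real \<Rightarrow> real" where
  "xi_fn q0 \<alpha> \<theta> x t = q0 * x * sin \<theta> + (1/2) * \<alpha> * t * tan \<theta>"

definition q_fn :: "real \<Rightarrow> real \<Rightarrow> real \<Rightarrow> real \<Rightarrow> real \<Rightarrow> complex" where
  "q_fn q0 \<alpha> \<theta> x t =
     complex_of_real q0 * exp (\<i> * complex_of_real (\<alpha> * t))
     * cos (complex_of_real \<theta> - \<i> * complex_of_real (xi_fn q0 \<alpha> \<theta> x t))
     * complex_of_real (sech (xi_fn q0 \<alpha> \<theta> x t))"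

definition s_fn :: "real \<Rightarrow> real \<Rightarrow> real \<Rightarrow> real \<Rightarrow> real \<Rightarrow> real" where
  "s_fn q0 \<alpha> \<theta> x t = (1/2) * q0 * \<alpha> * sin \<theta> * tan \<theta> * (sech (xi_fn q0 \<alpha> \<theta> x t))^2"

definition pdx :: "(real \<Rightarrow> real \<Rightarrow> 'a::real_normed_vector) \<Rightarrow> real \<Rightarrow> real \<Rightarrow> 'a" where
  "pdx f x t = vector_derivative (\<lambda>y. f y t) (at x)"

definition pdt :: "(real \<Rightarrow> real \<Rightarrow> 'a::real_normed_vector) \<Rightarrow> real \<Rightarrow> real \<Rightarrow> 'a" where
  "pdt f x t = vector_derivative (\<lambda>\<tau>. f x \<tau>) (at t)"

text \<open>Iterated partial derivatives: True = d/dx, False = d/dt (innermost last in list).\<close>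
fun pderivs :: "bool list \<Rightarrow> (real \<Rightarrow> real \<Rightarrow> 'a::real_normed_vector) \<Rightarrow> real \<Rightarrow> real \<Rightarrow> 'a" where
  "pderivs [] f = f"
| "pderivs (b # bs) f = (if b then pdx (pderivs bs f) else pdt (pderivs bs f))"

definition smooth2 :: "(real \<Rightarrow> real \<Rightarrow> 'a::real_normed_vector) \<Rightarrow> bool" where
  "smooth2 f \<longleftrightarrow> (\<forall>bs.
      continuous_on UNIV (\<lambda>(x, t). pderivs bs f x t) \<and>
      (\<forall>x t. (\<lambda>y. pderivs bs f y t) differentiable (at x) \<and>
             (\<lambda>\<tau>. pderivs bs f x \<tau>) differentiable (at t)))"

end

theory Submission
  imports Defs "HOL-Computational_Algebra.Polynomial" "HOL-Real_Asymp.Real_Asymp"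
begin

text \<open>
  Writing \<open>T = tanh \<xi>\<close>, the functions \<open>q\<close>, \<open>s\<close> and \<open>q(x,t) q(-x,-t)\<close> are all of the
  form \<open>e\<^sup>c\<^sup>t P(T)\<close> for a polynomial \<open>P\<close>, with \<open>\<xi>\<close> affine in \<open>(x,t)\<close>. Since
  \<open>tanh' = 1 - tanh\<^sup>2\<close>, partial derivatives preserve this form and act on \<open>P\<close> by
  explicit polynomial operations. Smoothness is then immediate, the two field equations
  become polynomial identities in \<open>T\<close>, and the limits as \<open>x \<rightarrow> \<plusminus>\<infinity>\<close> are \<open>e\<^sup>c\<^sup>t P(\<plusminus>1)\<close>.
\<close>

definition exp_poly_tanh ::
    "'a::{banach,real_normed_field} \<Rightarrow> 'a poly \<Rightarrow> real \<Rightarrow> real \<Rightarrow> real \<Rightarrow> real \<Rightarrow> 'a" where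
  "exp_poly_tanh c p a b x t = exp (c * of_real t) * poly p (of_real (tanh (a * x + b * t)))"

lemma has_vector_derivative_exp_poly_tanh_x:
  "((\<lambda>y. exp_poly_tanh c p a b y t) has_vector_derivative
     exp_poly_tanh c (pderiv p * [:of_real a, 0, - of_real a:]) a b x t) (at x)"
proof -
  let ?T = "tanh (a * x + b * t)"
  have "((\<lambda>y. tanh (a * y + b * t)) has_real_derivative a * (1 - ?T\<^sup>2)) (at x)"
    by (rule derivative_eq_intros refl | simp)+
  then have "((poly p \<circ> (\<lambda>y. of_real (tanh (a * y + b * t)) :: 'a)) has_vector_derivative
      of_real (a * (1 - ?T\<^sup>2)) * poly (pderiv p) (of_real ?T)) (at x)"
    by (rule field_vector_diff_chain_at[OF has_vector_derivative_of_real]) simp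
  from has_vector_derivative_mult_right[OF this, of "exp (c * of_real t)"] show ?thesis
    unfolding exp_poly_tanh_def by (simp add: o_def algebra_simps power2_eq_square)
qed

lemma has_vector_derivative_exp_poly_tanh_t:
  "((\<lambda>\<tau>. exp_poly_tanh c p a b x \<tau>) has_vector_derivative
     exp_poly_tanh c (smult c p + pderiv p * [:of_real b, 0, - of_real b:]) a b x t) (at t)"
proof -
  let ?T = "tanh (a * x + b * t)"
  have "((\<lambda>\<tau>. tanh (a * x + b * \<tau>)) has_real_derivative b * (1 - ?T\<^sup>2)) (at t)"
    by (rule derivative_eq_intros refl | simp)+
  then have tanh_part: "((poly p \<circ> (\<lambda>\<tau>. of_real (tanh (a * x + b * \<tau>)) :: 'a))
      has_vector_derivative of_real (b * (1 - ?T\<^sup>2)) * poly (pderiv p) (of_real ?T)) (at t)"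
    by (rule field_vector_diff_chain_at[OF has_vector_derivative_of_real]) simp
  have "((\<lambda>z. exp (c * z)) has_field_derivative c * exp (c * of_real t)) (at (of_real t))"
    by (auto intro!: derivative_eq_intros)
  from has_vector_derivative_mult[OF has_vector_derivative_real_field[OF this] tanh_part]
  show ?thesis
    unfolding exp_poly_tanh_def by (simp add: o_def algebra_simps power2_eq_square)
qed

lemma pdx_exp_poly_tanh:
  "pdx (exp_poly_tanh c p a b) = exp_poly_tanh c (pderiv p * [:of_real a, 0, - of_real a:]) a b"
  by (intro ext) (simp add: pdx_def vector_derivative_at[OF has_vector_derivative_exp_poly_tanh_x])

lemma pdt_exp_poly_tanh:
  "pdt (exp_poly_tanh c p a b) =
     exp_poly_tanh c (smult c p + pderiv p * [:of_real b, 0, - of_real b:]) a b"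
  by (intro ext) (simp add: pdt_def vector_derivative_at[OF has_vector_derivative_exp_poly_tanh_t])

lemma pderivs_exp_poly_tanh: "\<exists>p'. pderivs bs (exp_poly_tanh c p a b) = exp_poly_tanh c p' a b"
proof (induction bs)
  case Nil
  show ?case by auto
next
  case (Cons d bs)
  then obtain p' where "pderivs bs (exp_poly_tanh c p a b) = exp_poly_tanh c p' a b"
    by blast
  then show ?case
    by (cases d) (auto simp: pdx_exp_poly_tanh pdt_exp_poly_tanh)
qed

lemma smooth2_exp_poly_tanh: "smooth2 (exp_poly_tanh c p a b)"
  unfolding smooth2_def
proof (intro allI conjI)
  fix bs x t
  obtain p' where p': "pderivs bs (exp_poly_tanh c p a b) = exp_poly_tanh c p' a b"
    using pderivs_exp_poly_tanh by blast
  show "continuous_on UNIV (\<lambda>(x, t). pderivs bs (exp_poly_tanh c p a b) x t)"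
    unfolding p' exp_poly_tanh_def case_prod_unfold by (intro continuous_intros) auto
  show "(\<lambda>y. pderivs bs (exp_poly_tanh c p a b) y t) differentiable at x"
    unfolding p' by (rule differentiableI_vector[OF has_vector_derivative_exp_poly_tanh_x])
  show "(\<lambda>\<tau>. pderivs bs (exp_poly_tanh c p a b) x \<tau>) differentiable at t"
    unfolding p' by (rule differentiableI_vector[OF has_vector_derivative_exp_poly_tanh_t])
qed

lemma tendsto_exp_poly_tanh_at_top:
  assumes "a > 0"
  shows "((\<lambda>x. exp_poly_tanh c p a b x t) \<longlongrightarrow> exp (c * of_real t) * poly p 1) at_top"
proof -
  have "((\<lambda>x. tanh (a * x + b * t)) \<longlongrightarrow> 1) at_top"
    using assms by real_asymp
  then have "((\<lambda>x. exp_poly_tanh c p a b x t)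
      \<longlongrightarrow> exp (c * of_real t) * poly p (of_real 1)) at_top"
    unfolding exp_poly_tanh_def by (intro tendsto_intros)
  then show ?thesis by simp
qed

lemma tendsto_exp_poly_tanh_at_bot:
  assumes "a > 0"
  shows "((\<lambda>x. exp_poly_tanh c p a b x t) \<longlongrightarrow> exp (c * of_real t) * poly p (-1)) at_bot"
proof -
  have "((\<lambda>x. tanh (a * x + b * t)) \<longlongrightarrow> -1) at_bot"
    using assms by real_asymp
  then have "((\<lambda>x. exp_poly_tanh c p a b x t)
      \<longlongrightarrow> exp (c * of_real t) * poly p (of_real (-1))) at_bot"
    unfolding exp_poly_tanh_def by (intro tendsto_intros)
  then show ?thesis by simp
qed

lemma tendsto_exp_poly_tanh_at_infinity:
  assumes "a > 0" and "poly p 1 = 0" and "poly p (-1) = 0"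
  shows "((\<lambda>x. exp_poly_tanh c p a b x t) \<longlongrightarrow> 0) at_infinity"
proof -
  have "((\<lambda>x. exp_poly_tanh c p a b x t) \<longlongrightarrow> 0) at_top"
    using tendsto_exp_poly_tanh_at_top[OF assms(1), of c p b t] assms(2) by simp
  moreover have "((\<lambda>x. exp_poly_tanh c p a b x t) \<longlongrightarrow> 0) at_bot"
    using tendsto_exp_poly_tanh_at_bot[OF assms(1), of c p b t] assms(3) by simp
  ultimately show ?thesis
    unfolding at_infinity_eq_at_top_bot by (rule filterlim_sup)
qed

lemma cos_minus_i_times_mult_sech:
  "cos (complex_of_real \<theta> - \<i> * complex_of_real y) * complex_of_real (sech y) =
     complex_of_real (cos \<theta>) + \<i> * complex_of_real (sin \<theta> * tanh y)"
proof -
  have "cosh y \<noteq> 0"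
    by (metis cosh_real_pos less_irrefl)
  moreover have "cos (\<i> * complex_of_real y) = complex_of_real (cosh y)"
    and "sin (\<i> * complex_of_real y) = \<i> * complex_of_real (sinh y)"
    by (simp_all add: cos_i_times sin_i_times cosh_def sinh_def exp_of_real exp_minus)
  ultimately show ?thesis
    by (simp add: cos_diff cos_of_real sin_of_real sech_def tanh_def field_simps)
qed

lemma sech_square: "sech y ^ 2 = 1 - tanh y ^ 2"
proof -
  have "cosh y \<noteq> 0" and "sinh y ^ 2 + 1 \<noteq> 0"
    by (metis cosh_real_pos less_irrefl)
      (metis add_nonneg_pos zero_le_power2 zero_less_one less_irrefl)
  then show ?thesis
    using cosh_square_eq[of y] by (simp add: sech_def tanh_def power_divide divide_simps)
qed

lemma xi_fn_minus: "xi_fn q0 \<alpha> \<theta> (-x) (-t) = - xi_fn q0 \<alpha> \<theta> x t"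
  by (simp add: xi_fn_def)

lemma xi_fn_eq_affine: "xi_fn q0 \<alpha> \<theta> x t = q0 * sin \<theta> * x + \<alpha> * tan \<theta> / 2 * t"
  by (simp add: xi_fn_def algebra_simps)

lemma q_fn_eq:
  "q_fn q0 \<alpha> \<theta> x t = complex_of_real q0 * exp (\<i> * complex_of_real (\<alpha> * t))
     * (complex_of_real (cos \<theta>) + \<i> * complex_of_real (sin \<theta> * tanh (xi_fn q0 \<alpha> \<theta> x t)))"
  unfolding q_fn_def cos_minus_i_times_mult_sech[symmetric] by (simp add: mult.assoc)

lemma s_fn_even: "s_fn q0 \<alpha> \<theta> (-x) (-t) = s_fn q0 \<alpha> \<theta> x t"
  by (simp add: s_fn_def sech_def xi_fn_minus)

lemma q_fn_eq_exp_poly_tanh: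
  "q_fn q0 \<alpha> \<theta> =
     exp_poly_tanh (\<i> * of_real \<alpha>)
       [:complex_of_real (q0 * cos \<theta>), \<i> * complex_of_real (q0 * sin \<theta>):]
       (q0 * sin \<theta>) (\<alpha> * tan \<theta> / 2)"
  unfolding q_fn_eq[abs_def] exp_poly_tanh_def[abs_def] xi_fn_eq_affine
  by (simp add: algebra_simps)

lemma s_fn_eq_exp_poly_tanh:
  "s_fn q0 \<alpha> \<theta> =
     exp_poly_tanh 0
       [:q0 * \<alpha> * sin \<theta> * tan \<theta> / 2, 0, - (q0 * \<alpha> * sin \<theta> * tan \<theta> / 2):]
       (q0 * sin \<theta>) (\<alpha> * tan \<theta> / 2)"
  unfolding s_fn_def[abs_def] exp_poly_tanh_def[abs_def] xi_fn_eq_affine sech_square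
  by (simp add: algebra_simps power2_eq_square)

text \<open>The phases \<open>e\<^sup>\<plusminus>\<^sup>i\<^sup>\<alpha>\<^sup>t\<close> cancel and \<open>tanh\<close> is odd.\<close>
lemma q_fn_times_reflection_eq_exp_poly_tanh:
  "q_fn q0 \<alpha> \<theta> x t * q_fn q0 \<alpha> \<theta> (-x) (-t) =
     exp_poly_tanh 0
       [:complex_of_real ((q0 * cos \<theta>)\<^sup>2), 0, complex_of_real ((q0 * sin \<theta>)\<^sup>2):]
       (q0 * sin \<theta>) (\<alpha> * tan \<theta> / 2) x t"
  (is "_ = ?rhs")
proof -
  define E where "E = exp (\<i> * complex_of_real (\<alpha> * t))"
  define E' where "E' = exp (\<i> * complex_of_real (\<alpha> * -t))"
  define T where "T = complex_of_real (tanh (xi_fn q0 \<alpha> \<theta> x t))"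
  have phases_cancel: "E * E' = 1"
    unfolding E_def E'_def by (simp flip: exp_add)
  have "q_fn q0 \<alpha> \<theta> x t * q_fn q0 \<alpha> \<theta> (-x) (-t) =
      (E * E') * q0\<^sup>2 * ((cos \<theta>)\<^sup>2 - \<i>\<^sup>2 * (sin \<theta>)\<^sup>2 * T\<^sup>2)"
    unfolding q_fn_eq xi_fn_minus tanh_minus E_def[symmetric] E'_def[symmetric]
    by (simp add: T_def algebra_simps power2_eq_square)
  also have "\<dots> = ?rhs"
    unfolding phases_cancel T_def exp_poly_tanh_def xi_fn_eq_affine
    by (simp add: algebra_simps power2_eq_square)
  finally show ?thesis .
qed

lemma q_fn_field_equation:
  assumes "cos \<theta> \<noteq> 0"
  shows "pdt (pdx (q_fn q0 \<alpha> \<theta>)) x t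
           + 2 * complex_of_real (s_fn q0 \<alpha> \<theta> x t) * q_fn q0 \<alpha> \<theta> x t = 0"
  unfolding q_fn_eq_exp_poly_tanh s_fn_eq_exp_poly_tanh pdx_exp_poly_tanh pdt_exp_poly_tanh
  using assms by (simp add: exp_poly_tanh_def pderiv_pCons tan_def power2_eq_square field_simps)

lemma s_fn_field_equation:
  assumes "cos \<theta> \<noteq> 0"
  shows "complex_of_real (pdx (s_fn q0 \<alpha> \<theta>) x t) =
     - pdt (\<lambda>x' t'. q_fn q0 \<alpha> \<theta> x' t' * q_fn q0 \<alpha> \<theta> (-x') (-t')) x t"
  unfolding q_fn_times_reflection_eq_exp_poly_tanh s_fn_eq_exp_poly_tanh
    pdx_exp_poly_tanh pdt_exp_poly_tanh
  using assms by (simp add: exp_poly_tanh_def pderiv_pCons tan_def power2_eq_square field_simps)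

lemma smooth2_q_fn: "smooth2 (q_fn q0 \<alpha> \<theta>)"
  unfolding q_fn_eq_exp_poly_tanh by (rule smooth2_exp_poly_tanh)

lemma smooth2_s_fn: "smooth2 (s_fn q0 \<alpha> \<theta>)"
  unfolding s_fn_eq_exp_poly_tanh by (rule smooth2_exp_poly_tanh)

lemma tendsto_s_fn_at_infinity:
  assumes "q0 * sin \<theta> > 0"
  shows "((\<lambda>x. s_fn q0 \<alpha> \<theta> x t) \<longlongrightarrow> 0) at_infinity"
  unfolding s_fn_eq_exp_poly_tanh using assms by (rule tendsto_exp_poly_tanh_at_infinity) simp_all

lemma exp_i_times_of_real_add:
  "exp (\<i> * complex_of_real (u + v)) =
     exp (\<i> * complex_of_real u) * (complex_of_real (cos v) + \<i> * complex_of_real (sin v))"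
  by (simp add: distrib_left exp_add exp_Euler cos_of_real sin_of_real)

lemma tendsto_q_fn_at_top:
  assumes "q0 * sin \<theta> > 0"
  shows "((\<lambda>x. q_fn q0 \<alpha> \<theta> x t)
           \<longlongrightarrow> complex_of_real q0 * exp (\<i> * complex_of_real (\<alpha> * t + \<theta>))) at_top"
proof -
  have "complex_of_real q0 * exp (\<i> * complex_of_real (\<alpha> * t + \<theta>)) =
      exp (\<i> * of_real \<alpha> * of_real t)
        * poly [:complex_of_real (q0 * cos \<theta>), \<i> * complex_of_real (q0 * sin \<theta>):] 1"
    unfolding exp_i_times_of_real_add by (simp add: algebra_simps)
  then show ?thesis
    unfolding q_fn_eq_exp_poly_tanh by (simp only: tendsto_exp_poly_tanh_at_top[OF assms])
qed

lemma tendsto_q_fn_at_bot: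
  assumes "q0 * sin \<theta> > 0"
  shows "((\<lambda>x. q_fn q0 \<alpha> \<theta> x t)
           \<longlongrightarrow> complex_of_real q0 * exp (\<i> * complex_of_real (\<alpha> * t - \<theta>))) at_bot"
proof -
  have "complex_of_real q0 * exp (\<i> * complex_of_real (\<alpha> * t - \<theta>)) =
      exp (\<i> * of_real \<alpha> * of_real t)
        * poly [:complex_of_real (q0 * cos \<theta>), \<i> * complex_of_real (q0 * sin \<theta>):] (-1)"
    unfolding diff_conv_add_uminus exp_i_times_of_real_add by (simp add: algebra_simps)
  then show ?thesis
    unfolding q_fn_eq_exp_poly_tanh by (simp only: tendsto_exp_poly_tanh_at_bot[OF assms])
qed

theorem mainTheorem9:
  fixes q0 \<alpha> \<theta> :: real
  assumes "q0 > 0" and "0 < \<theta>" and "\<theta> < pi" and "\<theta> \<noteq> pi / 2"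
  defines "q \<equiv> q_fn q0 \<alpha> \<theta>" and "s \<equiv> s_fn q0 \<alpha> \<theta>"
  shows "(\<forall>x t. q x t = complex_of_real q0 * exp (\<i> * complex_of_real (\<alpha> * t))
              * (complex_of_real (cos \<theta>)
                 + \<i> * complex_of_real (sin \<theta> * tanh (xi_fn q0 \<alpha> \<theta> x t))))
    \<and> smooth2 q \<and> smooth2 s
    \<and> (\<forall>x t. pdt (pdx q) x t + 2 * complex_of_real (s x t) * q x t = 0)
    \<and> (\<forall>x t. complex_of_real (pdx s x t) = - pdt (\<lambda>x' t'. q x' t' * q (-x') (-t')) x t)
    \<and> (\<forall>x t. s (-x) (-t) = s x t)
    \<and> (\<forall>t. ((\<lambda>x. s x t) \<longlongrightarrow> 0) at_infinity)
    \<and> (\<forall>t. ((\<lambda>x. q x t) \<longlongrightarrow> complex_of_real q0 * exp (\<i> * complex_of_real (\<alpha> * t + \<theta>))) at_top)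
    \<and> (\<forall>t. ((\<lambda>x. q x t) \<longlongrightarrow> complex_of_real q0 * exp (\<i> * complex_of_real (\<alpha> * t - \<theta>))) at_bot)"
proof -
  have cos_nonzero: "cos \<theta> \<noteq> 0"
    using assms(2-4) cos_inj_pi[of \<theta> "pi / 2"] by auto
  have a_pos: "q0 * sin \<theta> > 0"
    using assms(1-3) sin_gt_zero by simp
  show ?thesis
    unfolding q_def s_def
    by (intro conjI allI q_fn_eq smooth2_q_fn smooth2_s_fn q_fn_field_equation s_fn_field_equation
        s_fn_even tendsto_s_fn_at_infinity tendsto_q_fn_at_top tendsto_q_fn_at_bot cos_nonzero a_pos)
qed

end
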